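(* For $p=(x,y)\in\mathbb{R}^2_{x<y}:=\{(x,y)\in\mathbb{R}^2\mid x<y\}$ set $\lambda(p):=\dfrac{y-x}{2\|(1,x,y)\|_2}$. For every $K>0$ and every $\alpha\ge 1$, the functions \[ \widetilde{\omega}(p)=\lambda(p)^\alpha,\qquad \omega_K(p)=\frac{2}{\pi}\arctan\!\left(\frac{\lambda(p)^\alpha}{K^\alpha}\right) \] are stable weightings. Moreover, for $\alpha=1$ both $\widetilde{\omega}$ and $\omega_K$ are effective weightings.
   Context: Notation: for $p=(x,y)\in\mathbb{R}^2$ write $(1,p):=(1,x,y)\in\mathbb{R}^3$; $\Delta:=\{(x,y)\mid x=y\}$ and $\|p-\Delta\|_\infty=\frac{y-x}{2}$ for $p\in\mathbb{R}^2_{x<y}$. $B_r=\{p\in\mathbb{R}^2:\|p\|_2\le r\}$, $B_r^c=\mathbb{R}^2\setminus B_r$. A persistence diagram (PD) is a measure $\mu_D=\sum_{p\in D}c_p\delta_p$ with $D\subset\mathbb{R}^2_{x<y}$ finite and $c_p\in\mathbb{N}$. For a measure $\mu$ and $Z\subset\mathbb{R}^2$, $\mathrm{pers}_Z(\mu)=\frac12\int_Z(y-x)\,d\mu((x,y))$. For a weighting $\omega$ (a function with values in $(0,1]$ on the points of diagrams), set $\Gamma_\omega(p):=\omega(p)(1,p)\in\mathbb{R}^3$. A stable weighting is a function $\omega$ with values in $(0,1]$ such that (i) $\Gamma_\omega$ is $C$-Lipschitz (Euclidean norms) for some $C>0$, and (ii) there is $C'>0$ with $\|\Gamma_\omega(p)\|_2\le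 C'\frac{y-x}{2}=C'\|p-\Delta\|_\infty$ for every $p=(x,y)\in\mathbb{R}^2_{x<y}$. An effective weighting is a function $\omega$ with values in $(0,1]$ such that for every sequence of PDs $\{\mu_{D_n}\}_{n\in\mathbb{N}}$: if $\lim_{r\to\infty}\sup_n\int_{B_r^c}\omega(p)\|p\|_2\,d\mu_{D_n}(p)=0$, then $\lim_{r\to\infty}\sup_n\mathrm{pers}_{B_r^c}(\mu_{D_n})=0$. *)

theory Defs
  imports "HOL-Analysis.Analysis" "HOL-Library.Multiset"
begin

text \<open>Points of R^2 are pairs (x,y) :: real \<times> real; the norm on real \<times> real
  (and on real \<times> real \<times> real) is the Euclidean norm.\<close>

definition halfplane :: "(real \<times> real) set" where
  "halfplane = {p. fst p < snd p}"

definition weighting :: "(real \<times> real \<Rightarrow> real) \<Rightarrow> bool" where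
  "weighting \<omega> \<longleftrightarrow> (\<forall>p\<in>halfplane. 0 < \<omega> p \<and> \<omega> p \<le> 1)"

definition Gamma :: "(real \<times> real \<Rightarrow> real) \<Rightarrow> real \<times> real \<Rightarrow> real \<times> real \<times> real" where
  "Gamma \<omega> p = (\<omega> p, \<omega> p * fst p, \<omega> p * snd p)"

definition stable_weighting :: "(real \<times> real \<Rightarrow> real) \<Rightarrow> bool" where
  "stable_weighting \<omega> \<longleftrightarrow> weighting \<omega>
     \<and> (\<exists>C>0. C-lipschitz_on halfplane (Gamma \<omega>))
     \<and> (\<exists>C'>0. \<forall>p\<in>halfplane. norm (Gamma \<omega> p) \<le> C' * ((snd p - fst p) / 2))"

text \<open>A persistence diagram: finite multiset of points of the half-plane
  (the multiplicity of p is the coefficient c_p).\<close>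
definition is_PD :: "(real \<times> real) multiset \<Rightarrow> bool" where
  "is_PD D \<longleftrightarrow> set_mset D \<subseteq> halfplane"

text \<open>Integral of f over the complement of the closed ball B_r against mu_D.\<close>
definition int_outside :: "real \<Rightarrow> (real \<times> real \<Rightarrow> real) \<Rightarrow> (real \<times> real) multiset \<Rightarrow> real" where
  "int_outside r f D = sum_mset (image_mset f (filter_mset (\<lambda>p. r < norm p) D))"

definition pers_outside :: "real \<Rightarrow> (real \<times> real) multiset \<Rightarrow> real" where
  "pers_outside r D = (1/2) * int_outside r (\<lambda>p. snd p - fst p) D"

definition effective_weighting :: "(real \<times> real \<Rightarrow> real) \<Rightarrow> bool" where
  "effective_weighting \<omega> \<longleftrightarrow> weighting \<omega> \<and>
     (\<forall>Ds :: nat \<Rightarrow> (real \<times> real) multiset. (\<forall>n. is_PD (Ds n)) \<longrightarrow>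
        ((\<lambda>r. SUP n. ereal (int_outside r (\<lambda>p. \<omega> p * norm p) (Ds n))) \<longlongrightarrow> 0) at_top \<longrightarrow>
        ((\<lambda>r. SUP n. ereal (pers_outside r (Ds n))) \<longlongrightarrow> 0) at_top)"

definition lam :: "real \<times> real \<Rightarrow> real" where
  "lam p = (snd p - fst p) / (2 * sqrt (1 + (fst p)\<^sup>2 + (snd p)\<^sup>2))"

end

theory Submission
  imports Defs
begin

text \<open>Both weightings are of the form \<open>g \<circ> \<lambda>\<close> with \<open>g\<close> Lipschitz on \<open>(0,1]\<close>, valued in
  \<open>(0,1]\<close> and bounded by \<open>c t\<close>. Since \<open>\<lambda>(p) = \<phi>(1,p) / \<parallel>(1,p)\<parallel>\<close> for the linear functional
  \<open>\<phi>(a,x,y) = (y-x)/2\<close> of norm at most 1, rescaling \<open>(1,p)\<close> to the length of \<open>(1,q)\<close> gives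
  \<open>|\<lambda>(p) - \<lambda>(q)| \<parallel>(1,q)\<parallel> \<le> 2 \<parallel>p - q\<parallel>\<close>. Splitting
  \<open>\<Gamma>(p) - \<Gamma>(q) = g(\<lambda> p) ((1,p) - (1,q)) + (g(\<lambda> p) - g(\<lambda> q)) (1,q)\<close> then makes \<open>\<Gamma>\<close>
  Lipschitz, and \<open>\<parallel>\<Gamma>(p)\<parallel> \<le> c \<lambda>(p) \<parallel>(1,p)\<parallel> = c (y-x)/2\<close>.
  For effectiveness, a lower bound \<open>\<omega> \<ge> m \<lambda>\<close> together with \<open>\<parallel>(1,p)\<parallel> \<le> 2\<parallel>p\<parallel>\<close> outside the
  unit ball gives \<open>y - x \<le> (4/m) \<omega>(p) \<parallel>p\<parallel>\<close>, so the persistence outside \<open>B\<^sub>r\<close> is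
  dominated by a fixed multiple of the weighted integral outside \<open>B\<^sub>r\<close>.\<close>

lemma arctan_lipschitz: "1-lipschitz_on UNIV arctan"
proof (rule lipschitz_onI)
  fix s t :: real
  have "norm (arctan s - arctan t) \<le> 1 * norm (s - t)"
  proof (rule field_differentiable_bound[of UNIV])
    show "(arctan has_field_derivative inverse (1 + z\<^sup>2)) (at z within UNIV)" for z :: real
      by (rule DERIV_arctan)
    show "norm (inverse (1 + z\<^sup>2)) \<le> 1" for z :: real
      using le_imp_inverse_le[of 1 "1 + z\<^sup>2"] by simp
  qed auto
  then show "dist (arctan s) (arctan t) \<le> 1 * dist s t"
    by (simp add: dist_norm)
qed simp

lemma powr_lipschitz_on_unit_interval:
  assumes "1 \<le> a"
  shows "a-lipschitz_on {0<..1} (\<lambda>t::real. t powr a)"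
proof (rule lipschitz_onI)
  fix s t :: real assume "s \<in> {0<..1}" "t \<in> {0<..1}"
  have "norm (s powr a - t powr a) \<le> a * norm (s - t)"
  proof (rule field_differentiable_bound[of "{0<..1}"])
    fix z :: real assume z: "z \<in> {0<..1}"
    show "((\<lambda>t. t powr a) has_field_derivative a * z powr (a - 1)) (at z within {0<..1})"
      using z by (auto intro!: derivative_eq_intros)
    have "z powr (a - 1) \<le> 1"
      using z assms by (intro powr_le1) auto
    then show "norm (a * z powr (a - 1)) \<le> a"
      using assms by (simp add: abs_mult mult_left_le)
  qed (use \<open>s \<in> _\<close> \<open>t \<in> _\<close> in auto)
  then show "dist (s powr a) (t powr a) \<le> a * dist s t"
    by (simp add: dist_norm)
qed (use assms in simp)

lemma arctan_le_self: "0 \<le> t \<Longrightarrow> arctan t \<le> t"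
  using lipschitz_onD[OF arctan_lipschitz, of t 0] by (simp add: dist_real_def)

lemma arctan_ge_div_one_plus_square:
  assumes "0 \<le> t"
  shows "t / (1 + t\<^sup>2) \<le> arctan t"
proof (cases "t = 0")
  case False
  then have "0 < t" using assms by simp
  then obtain z where z: "0 < z" "z < t" "arctan t - arctan 0 = (t - 0) * inverse (1 + z\<^sup>2)"
    using MVT2[of 0 t arctan "\<lambda>z. inverse (1 + z\<^sup>2)"] DERIV_arctan by force
  have "inverse (1 + t\<^sup>2) \<le> inverse (1 + z\<^sup>2)"
    using z by (intro le_imp_inverse_le) (auto intro: power_mono add_pos_nonneg)
  then show ?thesis
    using z \<open>0 < t\<close> by (simp add: divide_inverse mult_left_mono)
qed simp

lemma linear_div_norm_diff_le:
  fixes \<phi> :: "'a::real_normed_vector \<Rightarrow> real"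
  assumes "linear \<phi>" and \<phi>_le: "\<And>z. \<bar>\<phi> z\<bar> \<le> norm z" and "v \<noteq> 0"
  shows "\<bar>\<phi> v / norm v - \<phi> w / norm w\<bar> * norm w \<le> 2 * dist v w"
proof -
  define u where "u = (norm w / norm v) *\<^sub>R v"
  have "(\<phi> v / norm v - \<phi> w / norm w) * norm w = \<phi> (u - w)"
    using \<open>v \<noteq> 0\<close> by (cases "w = 0")
      (simp_all add: u_def linear_0[OF \<open>linear \<phi>\<close>] linear_diff[OF \<open>linear \<phi>\<close>]
        linear_scale[OF \<open>linear \<phi>\<close>] field_simps)
  then have "\<bar>\<phi> v / norm v - \<phi> w / norm w\<bar> * norm w = \<bar>\<phi> (u - w)\<bar>"
    by (metis abs_mult abs_norm_cancel)
  also have "\<dots> \<le> norm (u - v) + norm (v - w)"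
    using \<phi>_le[of "u - w"] norm_triangle_ineq[of "u - v" "v - w"] by simp
  also have "norm (u - v) = \<bar>norm w - norm v\<bar>"
  proof -
    have "u - v = ((norm w - norm v) / norm v) *\<^sub>R v"
      using \<open>v \<noteq> 0\<close> by (simp add: u_def algebra_simps diff_divide_distrib)
    then show ?thesis
      using \<open>v \<noteq> 0\<close> by simp
  qed
  also have "\<bar>norm w - norm v\<bar> \<le> norm (v - w)"
    by (metis norm_minus_commute norm_triangle_ineq3)
  finally show ?thesis
    by (simp add: dist_norm)
qed

definition lift :: "real \<times> real \<Rightarrow> real \<times> real \<times> real" where
  "lift p = (1, p)"

definition half_gap :: "real \<times> real \<times> real \<Rightarrow> real" where
  "half_gap z = (snd (snd z) - fst (snd z)) / 2"

lemma norm_triple: "norm (a, b, c) = sqrt (a\<^sup>2 + b\<^sup>2 + c\<^sup>2)"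
  for a b c :: real
  by (simp add: norm_Pair add.assoc)

lemma norm_lift: "norm (lift p) = sqrt (1 + (fst p)\<^sup>2 + (snd p)\<^sup>2)"
  by (cases p) (simp add: lift_def norm_triple)

lemma lift_nonzero: "lift p \<noteq> 0"
  by (simp add: lift_def zero_prod_def)

lemma dist_lift: "dist (lift p) (lift q) = dist p q"
  by (simp add: lift_def dist_Pair_Pair)

lemma Gamma_eq_scaleR_lift: "Gamma \<omega> p = \<omega> p *\<^sub>R lift p"
  by (cases p) (simp add: Gamma_def lift_def)

lemma linear_half_gap: "linear half_gap"
  by (rule linearI) (simp_all add: half_gap_def field_simps)

lemma abs_half_gap_le_norm: "\<bar>half_gap z\<bar> \<le> norm z"
proof -
  obtain a b c where z: "z = (a, b, c)"
    by (cases z) auto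
  have "\<bar>b\<bar> \<le> norm z" "\<bar>c\<bar> \<le> norm z"
    unfolding z norm_triple by (simp_all add: real_le_rsqrt)
  then show ?thesis
    by (simp add: half_gap_def z)
qed

lemma lam_eq_half_gap_div_norm: "lam p = half_gap (lift p) / norm (lift p)"
  by (simp add: lam_def half_gap_def norm_lift) (simp add: lift_def)

lemma lam_mult_norm_lift: "lam p * norm (lift p) = (snd p - fst p) / 2"
  using lift_nonzero[of p] by (simp add: lam_eq_half_gap_div_norm half_gap_def) (simp add: lift_def)

lemma lam_pos: "p \<in> halfplane \<Longrightarrow> 0 < lam p"
  by (simp add: lam_def halfplane_def add_pos_nonneg)

lemma lam_le_1: "lam p \<le> 1"
  using abs_half_gap_le_norm[of "lift p"] lift_nonzero[of p]
  by (simp add: lam_eq_half_gap_div_norm divide_le_eq_1)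

lemma lam_diff_mult_norm_lift_le: "\<bar>lam p - lam q\<bar> * norm (lift q) \<le> 2 * dist p q"
  using linear_div_norm_diff_le[OF linear_half_gap abs_half_gap_le_norm, of "lift p" "lift q"]
    lift_nonzero[of p]
  by (simp add: lam_eq_half_gap_div_norm dist_lift)

lemma stable_weighting_comp_lam:
  fixes g :: "real \<Rightarrow> real"
  assumes range: "\<And>t. t \<in> {0<..1} \<Longrightarrow> 0 < g t \<and> g t \<le> 1"
    and lip: "L-lipschitz_on {0<..1} g"
    and linear_bound: "\<And>t. t \<in> {0<..1} \<Longrightarrow> g t \<le> c * t"
  shows "stable_weighting (\<lambda>p. g (lam p))"
proof -
  let ?\<omega> = "\<lambda>p. g (lam p)"
  have lam_mem: "lam p \<in> {0<..1}" if "p \<in> halfplane" for p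
    using lam_pos[OF that] lam_le_1[of p] by simp
  have "c > 0"
    using range[of 1] linear_bound[of 1] by simp
  have "L \<ge> 0"
    using lip by (rule lipschitz_on_nonneg)
  have "(1 + 2 * L)-lipschitz_on halfplane (Gamma ?\<omega>)"
  proof (rule lipschitz_onI)
    fix p q assume p: "p \<in> halfplane" and q: "q \<in> halfplane"
    have "Gamma ?\<omega> p - Gamma ?\<omega> q
        = g (lam p) *\<^sub>R (lift p - lift q) + (g (lam p) - g (lam q)) *\<^sub>R lift q"
      by (simp add: Gamma_eq_scaleR_lift algebra_simps)
    then have "dist (Gamma ?\<omega> p) (Gamma ?\<omega> q)
        \<le> \<bar>g (lam p)\<bar> * dist p q + \<bar>g (lam p) - g (lam q)\<bar> * norm (lift q)"
      using norm_triangle_ineq[of "g (lam p) *\<^sub>R (lift p - lift q)" "(g (lam p) - g (lam q)) *\<^sub>R lift q"]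
        dist_lift[of p q]
      by (simp add: dist_norm)
    also have "\<dots> \<le> 1 * dist p q + L * \<bar>lam p - lam q\<bar> * norm (lift q)"
      using range[OF lam_mem[OF p]] lipschitz_onD[OF lip lam_mem[OF p] lam_mem[OF q]]
      by (intro add_mono mult_right_mono) (auto simp: dist_real_def)
    also have "\<dots> \<le> 1 * dist p q + L * (2 * dist p q)"
      unfolding mult.assoc
      using \<open>L \<ge> 0\<close> by (intro add_left_mono mult_left_mono lam_diff_mult_norm_lift_le)
    finally show "dist (Gamma ?\<omega> p) (Gamma ?\<omega> q) \<le> (1 + 2 * L) * dist p q"
      by (simp add: algebra_simps)
  qed (use \<open>L \<ge> 0\<close> in simp)
  moreover have "norm (Gamma ?\<omega> p) \<le> c * ((snd p - fst p) / 2)" if "p \<in> halfplane" for p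
  proof -
    have "norm (Gamma ?\<omega> p) = g (lam p) * norm (lift p)"
      using range[OF lam_mem[OF that]] by (simp add: Gamma_eq_scaleR_lift)
    also have "\<dots> \<le> c * lam p * norm (lift p)"
      using linear_bound[OF lam_mem[OF that]] by (intro mult_right_mono) auto
    also have "\<dots> = c * ((snd p - fst p) / 2)"
      by (simp only: mult.assoc lam_mult_norm_lift)
    finally show ?thesis .
  qed
  ultimately show ?thesis
    unfolding stable_weighting_def weighting_def
    using range lam_mem \<open>L \<ge> 0\<close> \<open>c > 0\<close>
    by (intro conjI exI[of _ "1 + 2 * L"] exI[of _ c]) (auto simp: add_pos_nonneg)
qed

lemma pers_outside_nonneg:
  assumes "is_PD D"
  shows "0 \<le> pers_outside r D"
proof -
  have "int_outside r (\<lambda>_. 0) D \<le> int_outside r (\<lambda>p. snd p - fst p) D"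
    unfolding int_outside_def using assms
    by (intro sum_mset_mono) (auto simp: is_PD_def halfplane_def)
  then show ?thesis
    by (simp add: pers_outside_def int_outside_def)
qed

lemma pers_outside_le_int_outside:
  assumes "is_PD D"
    and gap_le: "\<And>p. p \<in> halfplane \<Longrightarrow> r < norm p \<Longrightarrow> snd p - fst p \<le> c * f p"
  shows "pers_outside r D \<le> c / 2 * int_outside r f D"
proof -
  have "int_outside r (\<lambda>p. snd p - fst p) D \<le> int_outside r (\<lambda>p. c * f p) D"
    unfolding int_outside_def using assms(1)
    by (intro sum_mset_mono gap_le) (auto simp: is_PD_def)
  moreover have "int_outside r (\<lambda>p. c * f p) D = c * int_outside r f D"
    by (simp add: int_outside_def sum_mset_distrib_left)
  ultimately show ?thesis
    by (simp add: pers_outside_def)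
qed

lemma effective_weightingI:
  assumes "weighting \<omega>" and "0 \<le> c"
    and gap_le: "\<And>p. p \<in> halfplane \<Longrightarrow> 1 \<le> norm p \<Longrightarrow> snd p - fst p \<le> c * (\<omega> p * norm p)"
  shows "effective_weighting \<omega>"
  unfolding effective_weighting_def
proof (intro conjI allI impI)
  fix Ds :: "nat \<Rightarrow> (real \<times> real) multiset"
  assume PD: "\<forall>n. is_PD (Ds n)"
  define I where "I r = (SUP n. ereal (int_outside r (\<lambda>p. \<omega> p * norm p) (Ds n)))" for r
  assume "(I \<longlongrightarrow> 0) at_top"
  then have lim: "((\<lambda>r. ereal (c / 2) * I r) \<longlongrightarrow> 0) at_top"
    using tendsto_cmult_ereal[of "ereal (c / 2)" I 0] by simp
  have pers_le: "ereal (pers_outside r (Ds n)) \<le> ereal (c / 2) * I r" if "1 \<le> r" for r n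
  proof -
    have "ereal (pers_outside r (Ds n))
        \<le> ereal (c / 2) * ereal (int_outside r (\<lambda>p. \<omega> p * norm p) (Ds n))"
      unfolding times_ereal.simps(1) ereal_less_eq(3)
      using PD that by (intro pers_outside_le_int_outside gap_le) auto
    also have "\<dots> \<le> ereal (c / 2) * I r"
      unfolding I_def using \<open>0 \<le> c\<close> by (intro ereal_mult_left_mono SUP_upper) auto
    finally show ?thesis .
  qed
  show "((\<lambda>r. SUP n. ereal (pers_outside r (Ds n))) \<longlongrightarrow> 0) at_top"
  proof (rule tendsto_sandwich[OF _ _ tendsto_const lim])
    show "\<forall>\<^sub>F r in at_top. 0 \<le> (SUP n. ereal (pers_outside r (Ds n)))"
      using PD pers_outside_nonneg by (intro always_eventually allI SUP_upper2[of 0]) auto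
    show "\<forall>\<^sub>F r in at_top. (SUP n. ereal (pers_outside r (Ds n))) \<le> ereal (c / 2) * I r"
      using eventually_ge_at_top[of "1::real"] by eventually_elim (auto intro: SUP_least pers_le)
  qed
qed fact

lemma gap_le_lam_mult_norm:
  assumes "p \<in> halfplane" and "1 \<le> norm p"
  shows "snd p - fst p \<le> 4 * (lam p * norm p)"
proof -
  have "norm (lift p) \<le> 2 * norm p"
    using norm_Pair_le[of "1::real" p] assms(2) by (simp add: lift_def)
  then have "lam p * norm (lift p) \<le> lam p * (2 * norm p)"
    using lam_pos[OF assms(1)] by (intro mult_left_mono) auto
  then show ?thesis
    by (simp add: lam_mult_norm_lift)
qed

lemma effective_weighting_if_ge_lam:
  assumes "weighting \<omega>" and "0 < m" and ge_lam: "\<And>p. p \<in> halfplane \<Longrightarrow> m * lam p \<le> \<omega> p"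
  shows "effective_weighting \<omega>"
proof (rule effective_weightingI[OF \<open>weighting \<omega>\<close>, of "4 / m"])
  fix p assume p: "p \<in> halfplane" and "1 \<le> norm p"
  then have "snd p - fst p \<le> 4 / m * ((m * lam p) * norm p)"
    using gap_le_lam_mult_norm \<open>0 < m\<close> by simp
  also have "\<dots> \<le> 4 / m * (\<omega> p * norm p)"
    using ge_lam[OF p] \<open>0 < m\<close> by (intro mult_left_mono mult_right_mono) auto
  finally show "snd p - fst p \<le> 4 / m * (\<omega> p * norm p)" .
qed (use \<open>0 < m\<close> in simp)

lemma stable_weighting_lam_powr:
  assumes "1 \<le> \<alpha>"
  shows "stable_weighting (\<lambda>p. lam p powr \<alpha>)"
proof (rule stable_weighting_comp_lam[where c = 1])
  show "\<alpha>-lipschitz_on {0<..1} (\<lambda>t. t powr \<alpha>)"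
    using assms by (rule powr_lipschitz_on_unit_interval)
  fix t :: real assume t: "t \<in> {0<..1}"
  then show "0 < t powr \<alpha> \<and> t powr \<alpha> \<le> 1"
    using assms by (auto intro: powr_le1)
  have "t powr \<alpha> \<le> t powr 1"
    using t assms by (intro powr_mono') auto
  then show "t powr \<alpha> \<le> 1 * t"
    using t by simp
qed

lemma stable_weighting_arctan_lam_powr:
  assumes "0 < K" and "1 \<le> \<alpha>"
  shows "stable_weighting (\<lambda>p. 2 / pi * arctan (lam p powr \<alpha> / K powr \<alpha>))"
proof (rule stable_weighting_comp_lam[where c = "2 / pi / K powr \<alpha>"])
  let ?f = "\<lambda>t::real. t powr \<alpha> / K powr \<alpha>"
  have "(1 / K powr \<alpha> * \<alpha>)-lipschitz_on {0<..1} ?f"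
    using lipschitz_on_cmult_real_nonneg[OF powr_lipschitz_on_unit_interval[OF assms(2)],
        of "1 / K powr \<alpha>"]
    by simp
  then have "(1 * (1 / K powr \<alpha> * \<alpha>))-lipschitz_on {0<..1} (\<lambda>t. arctan (?f t))"
    by (rule lipschitz_on_compose2) (rule lipschitz_on_subset[OF arctan_lipschitz], simp)
  then show "(2 / pi * (1 * (1 / K powr \<alpha> * \<alpha>)))-lipschitz_on {0<..1} (\<lambda>t. 2 / pi * arctan (?f t))"
    by (rule lipschitz_on_cmult_real_nonneg) simp
  fix t :: real assume t: "t \<in> {0<..1}"
  have "0 < arctan (?f t)"
    using t assms by simp
  then show "0 < 2 / pi * arctan (?f t) \<and> 2 / pi * arctan (?f t) \<le> 1"
    using arctan_ubound[of "?f t"] by (simp add: field_simps)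
  have "t powr \<alpha> \<le> t powr 1"
    using t assms by (intro powr_mono') auto
  then have "?f t \<le> t / K powr \<alpha>"
    using t by (intro divide_right_mono) auto
  then have "arctan (?f t) \<le> t / K powr \<alpha>"
    using arctan_le_self[of "?f t"] by simp
  then have "2 / pi * arctan (?f t) \<le> 2 / pi * (t / K powr \<alpha>)"
    by (rule mult_left_mono) simp
  then show "2 / pi * arctan (?f t) \<le> 2 / pi / K powr \<alpha> * t"
    by simp
qed

lemma effective_weighting_lam:
  "effective_weighting (\<lambda>p. lam p powr 1)"
proof (rule effective_weighting_if_ge_lam[where m = 1])
  show "weighting (\<lambda>p. lam p powr 1)"
    using stable_weighting_lam_powr[of 1] by (simp add: stable_weighting_def)
qed (simp_all add: lam_pos)

lemma effective_weighting_arctan_lam: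
  assumes "0 < K"
  shows "effective_weighting (\<lambda>p. 2 / pi * arctan (lam p powr 1 / K powr 1))"
proof (rule effective_weighting_if_ge_lam[where m = "2 / pi / K / (1 + 1 / K\<^sup>2)"])
  show "weighting (\<lambda>p. 2 / pi * arctan (lam p powr 1 / K powr 1))"
    using stable_weighting_arctan_lam_powr[OF assms, of 1] by (simp add: stable_weighting_def)
  show "0 < 2 / pi / K / (1 + 1 / K\<^sup>2)"
    using assms by (simp add: add_pos_nonneg)
  fix p assume "p \<in> halfplane"
  define t where "t = lam p / K"
  have "0 < t" "t \<le> 1 / K"
    using lam_pos[OF \<open>p \<in> halfplane\<close>] lam_le_1[of p] assms
    by (auto simp: t_def divide_right_mono)
  then have "1 + t\<^sup>2 \<le> 1 + 1 / K\<^sup>2"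
    using power_mono[of t "1 / K" 2] by (simp add: power_divide)
  then have "t / (1 + 1 / K\<^sup>2) \<le> t / (1 + t\<^sup>2)"
    using \<open>0 < t\<close> by (intro divide_left_mono) (auto intro!: mult_pos_pos add_pos_nonneg)
  also have "\<dots> \<le> arctan t"
    using \<open>0 < t\<close> by (intro arctan_ge_div_one_plus_square) simp
  finally have "2 / pi * (t / (1 + 1 / K\<^sup>2)) \<le> 2 / pi * arctan t"
    by (rule mult_left_mono) simp
  then show "2 / pi / K / (1 + 1 / K\<^sup>2) * lam p \<le> 2 / pi * arctan (lam p powr 1 / K powr 1)"
    using lam_pos[OF \<open>p \<in> halfplane\<close>] assms by (simp add: t_def mult.assoc)
qed

theorem mainTheorem1:
  shows "(\<forall>K::real. \<forall>\<alpha>::real. K > 0 \<and> \<alpha> \<ge> 1 \<longrightarrow>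
            stable_weighting (\<lambda>p. lam p powr \<alpha>) \<and>
            stable_weighting (\<lambda>p. 2 / pi * arctan (lam p powr \<alpha> / K powr \<alpha>)))
       \<and> effective_weighting (\<lambda>p. lam p powr 1)
       \<and> (\<forall>K::real. K > 0 \<longrightarrow> effective_weighting (\<lambda>p. 2 / pi * arctan (lam p powr 1 / K powr 1)))"
  using stable_weighting_lam_powr stable_weighting_arctan_lam_powr
    effective_weighting_lam effective_weighting_arctan_lam
  by blast

end
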